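(* Let $n\ge1$, $G\le S_n$ and $\chi:G\to\mathbb C$ an arbitrary function. The following are equivalent: (1) $d_\chi^G(A)=d_\chi^G(A^T)$ for every $A\in M_n(\mathbb C)$; (2) $d_\chi^G(AB)=d_\chi^G(BA)$ for all $A,B\in\mathbb S_n(\mathbb C)$; (3) $\hat\chi(\sigma)=\hat\chi(\sigma^{-1})$ for every $\sigma\in S_n$ (equivalently, $\chi(\sigma)=\chi(\sigma^{-1})$ for every $\sigma\in G$).
   Context: $\mathbb S_n(\mathbb C)$ is the set of complex symmetric $n\times n$ matrices. For $G\le S_n$ and $\chi:G\to\mathbb C$, $\hat\chi:S_n\to\mathbb C$ is the extension of $\chi$ by $0$ outside $G$ and $d_\chi^G(A)=\sum_{\sigma\in S_n}\hat\chi(\sigma)\prod_{i=1}^n A_{i\,\sigma(i)}$. *)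

theory Defs
  imports "HOL-Analysis.Analysis"
begin

text \<open>The symmetric group S_n on the index type 'n (with n = CARD('n)).\<close>
definition Sym :: "('n::finite \<Rightarrow> 'n) set" where
  "Sym = {p. p permutes (UNIV :: 'n set)}"

definition perm_subgroup :: "('n::finite \<Rightarrow> 'n) set \<Rightarrow> bool" where
  "perm_subgroup G \<longleftrightarrow> G \<subseteq> Sym \<and> id \<in> G \<and>
     (\<forall>p\<in>G. \<forall>q\<in>G. p \<circ> q \<in> G) \<and> (\<forall>p\<in>G. inv p \<in> G)"

definition chi_hat :: "('n \<Rightarrow> 'n) set \<Rightarrow> (('n \<Rightarrow> 'n) \<Rightarrow> complex) \<Rightarrow> ('n \<Rightarrow> 'n) \<Rightarrow> complex" where
  "chi_hat G chi \<sigma> = (if \<sigma> \<in> G then chi \<sigma> else 0)"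

definition gen_matrix_fun :: "('n::finite \<Rightarrow> 'n) set \<Rightarrow> (('n \<Rightarrow> 'n) \<Rightarrow> complex) \<Rightarrow> complex^'n^'n \<Rightarrow> complex" where
  "gen_matrix_fun G chi A = (\<Sum>\<sigma>\<in>Sym. chi_hat G chi \<sigma> * (\<Prod>i\<in>UNIV. A $ i $ \<sigma> i))"

definition sym_matrices :: "(complex^'n^'n) set" where
  "sym_matrices = {A. transpose A = A}"

end

theory Submission
  imports Defs "HOL-Combinatorics.Orbits"
begin

text \<open>
  Reindexing the defining sum by \<open>\<sigma> \<mapsto> \<sigma>\<inverse>\<close> shows that \<open>d(A\<^sup>T)\<close> is the generalized
  matrix function of \<open>\<sigma> \<mapsto> chi_hat (\<sigma>\<inverse>)\<close>, so (3) gives (1); and (1) gives (2) because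
  \<open>(AB)\<^sup>T = BA\<close> for symmetric \<open>A, B\<close>. For (2) \<Rightarrow> (3), write \<open>\<sigma> = \<alpha>\<beta>\<close> as a product of two
  involutions: their permutation matrices \<open>P\<^sub>\<alpha>, P\<^sub>\<beta>\<close> are symmetric, the products
  \<open>P\<^sub>\<alpha>P\<^sub>\<beta>, P\<^sub>\<beta>P\<^sub>\<alpha>\<close> are the permutation matrices of \<open>\<sigma>\<close> and \<open>\<sigma>\<inverse>\<close>, and \<open>d(P\<^sub>\<pi>) = chi_hat (\<pi>)\<close>.
\<close>

lemma funpow_inv_eq_if_funpow_eq:
  assumes "bij p" and "(p ^^ a) y = (p ^^ b) y"
  shows "(inv p ^^ a) y = (inv p ^^ b) y"
proof -
  have "(inv p ^^ a) y = (inv p ^^ a) ((inv p ^^ b) ((p ^^ b) y))"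
    using inv_fn_o_fn_is_id[OF \<open>bij p\<close>, of b] by (simp add: fun_eq_iff)
  also have "\<dots> = (inv p ^^ b) ((inv p ^^ a) ((p ^^ a) y))"
    using assms(2) by (metis add.commute comp_apply funpow_add)
  also have "\<dots> = (inv p ^^ b) y"
    using inv_fn_o_fn_is_id[OF \<open>bij p\<close>, of a] by (simp add: fun_eq_iff)
  finally show ?thesis .
qed

lemma funpow_inv_eq_if_funpow_eq_inv:
  assumes "bij p" and "(p ^^ a) y = (inv p ^^ b) y"
  shows "(inv p ^^ a) y = (p ^^ b) y"
proof -
  have "(inv p ^^ a) y = (p ^^ b) ((inv p ^^ b) ((inv p ^^ a) y))"
    using fn_o_inv_fn_is_id[OF \<open>bij p\<close>, of b] by (simp add: fun_eq_iff)
  also have "\<dots> = (p ^^ b) ((inv p ^^ a) ((inv p ^^ b) y))"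
    by (metis add.commute comp_apply funpow_add)
  also have "\<dots> = (p ^^ b) y"
    using assms(2) inv_fn_o_fn_is_id[OF \<open>bij p\<close>, of a] by (metis comp_apply)
  finally show ?thesis .
qed

lemma permutation_orbit_eq:
  assumes "permutation p" and "y \<in> orbit p x"
  shows "orbit p y = orbit p x"
proof
  have x_in: "x \<in> orbit p x" using assms(1) by (rule permutation_self_in_orbit)
  show "orbit p y \<subseteq> orbit p x" using assms(2) by (auto intro: orbit_trans)
  have "x \<in> orbit p y" using x_in assms(2) by (rule orbit_swap)
  then show "orbit p x \<subseteq> orbit p y" by (auto intro: orbit_trans)
qed

lemma permutation_eq_comp_involutions:
  assumes "permutation p"
  obtains \<alpha> \<beta> where "\<alpha> \<circ> \<alpha> = id" and "\<beta> \<circ> \<beta> = id" and "p = \<alpha> \<circ> \<beta>"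
proof -
  have "bij p" using assms by (rule permutation_bijective)
  have reach_in_orbit: "(p ^^ n) x \<in> orbit p x" for n x
    using assms by (auto simp: orbit_altdef_permutation)
  define r where "r x = (SOME y. y \<in> orbit p x)" for x
  have r_in_orbit: "r x \<in> orbit p x" for x
    unfolding r_def using permutation_self_in_orbit[OF assms] by (rule someI)
  have r_cong: "r y = r x" if "y \<in> orbit p x" for x y
    unfolding r_def permutation_orbit_eq[OF assms that] ..
  have "x \<in> orbit p (r x)" for x
    using permutation_orbit_eq[OF assms r_in_orbit] permutation_self_in_orbit[OF assms] by simp
  then have "\<exists>n. (p ^^ n) (r x) = x" for x
    by (auto simp: orbit_altdef_permutation[OF assms]) metis
  then obtain k where k: "(p ^^ k x) (r x) = x" for x by metis
  \<comment> \<open>\<open>\<beta>\<close> reflects every cycle about its base point \<open>r x\<close>: \<open>p\<^sup>k(r x) \<mapsto> p\<^sup>-\<^sup>k(r x)\<close>.\<close>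
  define \<beta> where "\<beta> x = (inv p ^^ k x) (r x)" for x
  have \<beta>_eq: "\<beta> x = (inv p ^^ n) (r x)" if "(p ^^ n) (r x) = x" for n x
    unfolding \<beta>_def using funpow_inv_eq_if_funpow_eq[OF \<open>bij p\<close>] k that by metis
  have "(p ^^ k x) (\<beta> x) = r x" for x
    using fn_o_inv_fn_is_id[OF \<open>bij p\<close>, of "k x"] by (simp add: \<beta>_def fun_eq_iff)
  then have r_\<beta>: "r (\<beta> x) = r x" for x
    using r_cong reach_in_orbit r_in_orbit by metis
  have \<beta>_\<beta>: "\<beta> (\<beta> x) = x" for x
  proof -
    have "(p ^^ k (\<beta> x)) (r x) = (inv p ^^ k x) (r x)"
      using k[of "\<beta> x"] unfolding r_\<beta> by (simp only: \<beta>_def[of x])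
    then have "(inv p ^^ k (\<beta> x)) (r x) = (p ^^ k x) (r x)"
      by (rule funpow_inv_eq_if_funpow_eq_inv[OF \<open>bij p\<close>])
    then show ?thesis unfolding k \<beta>_def[of "\<beta> x"] r_\<beta> .
  qed
  have \<beta>_p: "\<beta> (p x) = inv p (\<beta> x)" for x
  proof -
    have r_p: "r (p x) = r x" using r_cong orbit.base by metis
    have "(p ^^ Suc (k x)) (r (p x)) = p x" using k by (simp add: r_p)
    from \<beta>_eq[OF this] show ?thesis by (simp add: r_p \<beta>_def)
  qed
  show thesis
  proof
    show "(p \<circ> \<beta>) \<circ> (p \<circ> \<beta>) = id"
      using \<beta>_p \<beta>_\<beta> \<open>bij p\<close> by (simp add: fun_eq_iff bij_inv_eq_iff)
    show "\<beta> \<circ> \<beta> = id" using \<beta>_\<beta> by (simp add: fun_eq_iff)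
    show "p = (p \<circ> \<beta>) \<circ> \<beta>" using \<beta>_\<beta> by (simp add: fun_eq_iff)
  qed
qed

lemma Sym_iff_bij: "\<sigma> \<in> Sym \<longleftrightarrow> bij \<sigma>"
  unfolding Sym_def by (auto intro: permutes_bij bij_imp_permutes)

definition perm_matrix :: "('n::finite \<Rightarrow> 'n) \<Rightarrow> complex^'n^'n" where
  "perm_matrix \<pi> = (\<chi> i j. if j = \<pi> i then 1 else 0)"

lemma gen_matrix_fun_perm_matrix:
  assumes "\<pi> \<in> Sym"
  shows "gen_matrix_fun G chi (perm_matrix \<pi>) = chi_hat G chi \<pi>"
proof -
  have "(\<Prod>i\<in>UNIV. perm_matrix \<pi> $ i $ \<tau> i) = (if \<tau> = \<pi> then 1 else 0)" for \<tau>
  proof (cases "\<tau> = \<pi>")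
    case False
    then obtain i where "\<tau> i \<noteq> \<pi> i" by auto
    then show ?thesis by (auto simp: perm_matrix_def intro!: prod_zero)
  qed (simp add: perm_matrix_def)
  then show ?thesis
    using assms by (simp add: gen_matrix_fun_def Sym_def finite_permutations if_distrib[of "(*) _"] sum.delta' cong: if_cong)
qed

lemma perm_matrix_mult: "perm_matrix \<pi> ** perm_matrix \<tau> = perm_matrix (\<tau> \<circ> \<pi>)"
proof -
  have "(\<Sum>k\<in>UNIV. (if k = \<pi> i then 1 else 0) * (if j = \<tau> k then 1 else 0)) =
        (if j = \<tau> (\<pi> i) then 1 else (0::complex))" for i j
    by (simp add: if_distrib[of "\<lambda>x. x * _"] sum.delta cong: if_cong)
  then show ?thesis by (simp add: perm_matrix_def matrix_matrix_mult_def vec_eq_iff)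
qed

lemma perm_matrix_symmetric:
  assumes "\<alpha> \<circ> \<alpha> = id"
  shows "perm_matrix \<alpha> \<in> sym_matrices"
proof -
  have "i = \<alpha> j \<longleftrightarrow> j = \<alpha> i" for i j using assms by (metis comp_apply id_apply)
  then show ?thesis by (simp add: sym_matrices_def perm_matrix_def transpose_def vec_eq_iff)
qed

lemma gen_matrix_fun_transpose:
  "gen_matrix_fun G chi (transpose A) = (\<Sum>\<sigma>\<in>Sym. chi_hat G chi (inv \<sigma>) * (\<Prod>i\<in>UNIV. A $ i $ \<sigma> i))"
proof -
  have prod_transpose: "(\<Prod>i\<in>UNIV. transpose A $ i $ \<sigma> i) = (\<Prod>i\<in>UNIV. A $ i $ inv \<sigma> i)"
    if "\<sigma> \<in> Sym" for \<sigma>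
  proof -
    have "\<sigma> permutes UNIV" using that by (simp add: Sym_def)
    then show ?thesis
      by (subst prod.permute[of \<sigma>]) (simp_all add: transpose_def permutes_inverses)
  qed
  have "gen_matrix_fun G chi (transpose A) = (\<Sum>\<sigma>\<in>Sym. chi_hat G chi \<sigma> * (\<Prod>i\<in>UNIV. A $ i $ inv \<sigma> i))"
    unfolding gen_matrix_fun_def using prod_transpose by simp
  also have "\<dots> = (\<Sum>\<sigma>\<in>Sym. chi_hat G chi (inv \<sigma>) * (\<Prod>i\<in>UNIV. A $ i $ \<sigma> i))"
    by (rule sum.reindex_bij_witness[of _ inv inv]) (auto simp: Sym_iff_bij bij_imp_bij_inv inv_inv_eq)
  finally show ?thesis .
qed

lemma gen_matrix_fun_mult_commute_symmetric:
  assumes "\<forall>A. gen_matrix_fun G chi A = gen_matrix_fun G chi (transpose A)"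
    and "A \<in> sym_matrices" and "B \<in> sym_matrices"
  shows "gen_matrix_fun G chi (A ** B) = gen_matrix_fun G chi (B ** A)"
proof -
  have "transpose (A ** B) = B ** A"
    using assms(2,3) by (simp add: matrix_transpose_mul sym_matrices_def)
  then show ?thesis using assms(1) by metis
qed

lemma chi_hat_inv_eq_if_mult_commute_symmetric:
  assumes "\<forall>A\<in>sym_matrices. \<forall>B\<in>sym_matrices. gen_matrix_fun G chi (A ** B) = gen_matrix_fun G chi (B ** A)"
    and "\<sigma> \<in> Sym"
  shows "chi_hat G chi \<sigma> = chi_hat G chi (inv \<sigma>)"
proof -
  have "permutation \<sigma>"
    using \<open>\<sigma> \<in> Sym\<close> by (auto simp: Sym_def intro: permutes_imp_permutation)
  then obtain \<alpha> \<beta> where \<alpha>: "\<alpha> \<circ> \<alpha> = id" and \<beta>: "\<beta> \<circ> \<beta> = id" and \<sigma>: "\<sigma> = \<alpha> \<circ> \<beta>"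
    by (rule permutation_eq_comp_involutions)
  have "inv \<sigma> = \<beta> \<circ> \<alpha>"
    unfolding \<sigma> using pointfree_idE[OF \<alpha>] pointfree_idE[OF \<beta>]
    by (intro inv_unique_comp) (simp_all add: fun_eq_iff)
  moreover have "gen_matrix_fun G chi (perm_matrix \<beta> ** perm_matrix \<alpha>)
      = gen_matrix_fun G chi (perm_matrix \<alpha> ** perm_matrix \<beta>)"
    using assms(1) perm_matrix_symmetric[OF \<alpha>] perm_matrix_symmetric[OF \<beta>] by blast
  moreover have "inv \<sigma> \<in> Sym" using \<open>\<sigma> \<in> Sym\<close> by (simp add: Sym_iff_bij bij_imp_bij_inv)
  ultimately show ?thesis
    using \<open>\<sigma> \<in> Sym\<close> by (simp add: perm_matrix_mult gen_matrix_fun_perm_matrix flip: \<sigma>)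
qed

lemma chi_hat_inv_eq_iff:
  assumes "perm_subgroup G"
  shows "(\<forall>\<sigma>\<in>Sym. chi_hat G chi \<sigma> = chi_hat G chi (inv \<sigma>)) \<longleftrightarrow> (\<forall>\<sigma>\<in>G. chi \<sigma> = chi (inv \<sigma>))"
proof -
  have G_Sym: "G \<subseteq> Sym" and G_inv: "\<And>\<sigma>. \<sigma> \<in> G \<Longrightarrow> inv \<sigma> \<in> G"
    using assms by (auto simp: perm_subgroup_def)
  have "inv \<sigma> \<in> G \<longleftrightarrow> \<sigma> \<in> G" if "\<sigma> \<in> Sym" for \<sigma>
    using G_inv that by (metis Sym_iff_bij inv_inv_eq)
  then show ?thesis
    using G_Sym unfolding chi_hat_def by (metis subsetD)
qed

theorem mainTheorem10:
  fixes G :: "('n::finite \<Rightarrow> 'n) set" and chi :: "('n \<Rightarrow> 'n) \<Rightarrow> complex"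
  assumes "perm_subgroup G"
  shows "((\<forall>A :: complex^'n^'n. gen_matrix_fun G chi A = gen_matrix_fun G chi (transpose A))
          \<longleftrightarrow> (\<forall>A\<in>sym_matrices. \<forall>B\<in>sym_matrices. gen_matrix_fun G chi (A ** B) = gen_matrix_fun G chi (B ** A)))
       \<and> ((\<forall>A\<in>sym_matrices. \<forall>B\<in>sym_matrices. gen_matrix_fun G chi (A ** B) = gen_matrix_fun G chi (B ** A))
          \<longleftrightarrow> (\<forall>\<sigma>\<in>Sym. chi_hat G chi \<sigma> = chi_hat G chi (inv \<sigma>)))
       \<and> ((\<forall>\<sigma>\<in>Sym. chi_hat G chi \<sigma> = chi_hat G chi (inv \<sigma>))
          \<longleftrightarrow> (\<forall>\<sigma>\<in>G. chi \<sigma> = chi (inv \<sigma>)))"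
proof -
  have "(\<forall>\<sigma>\<in>Sym. chi_hat G chi \<sigma> = chi_hat G chi (inv \<sigma>))
      \<Longrightarrow> gen_matrix_fun G chi A = gen_matrix_fun G chi (transpose A)" for A :: "complex^'n^'n"
    unfolding gen_matrix_fun_transpose unfolding gen_matrix_fun_def by (intro sum.cong) simp_all
  moreover note gen_matrix_fun_mult_commute_symmetric[of G chi]
    chi_hat_inv_eq_if_mult_commute_symmetric[of G chi]
  ultimately show ?thesis
    using chi_hat_inv_eq_iff[OF assms] by meson
qed

end
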